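(* Let $N\ge3$ and let $l_0$ be the trajectory of system (S2) on the unstable manifold of $Q_1=(0,0,0)$ contained in the plane $\{z=0\}$ with $x>0$ (leaving $Q_1$ tangent to $(N,-1,0)$). Writing $(X,Y,Z)=(1/x,\,y/x,\,z/x)$ along it, and with $p_F(\sigma)=m+\frac{\sigma+2}{N}$: (a) If $m<p<p_F(\sigma)$, then along $l_0$, $Y\to-\infty$ and $X/Y\to0$ (and $Z\equiv0$), i.e. $l_0$ connects to the critical point at infinity $Q_5$. (b) If $p=p_F(\sigma)$, then $l_0$ is exactly the half-line $\{y=-x/N,\ z=0,\ x>0\}$ and it connects to $P_2$, i.e. $(X,Y,Z)\to\left(0,-\frac{p-m}{\sigma+2},0\right)$. (c) If $p>p_F(\sigma)$, then $l_0$ connects to $P_1$, i.e. $(X,Y,Z)\to(0,0,0)$.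
   Context: Let $m>1$, $\sigma>0$, $p>m$. System (S2) is $$\dot x=x(2-(m-1)y),\quad \dot y=-x-(N-2)y+z-my^2-\tfrac{p-m}{\sigma+2}xy,\quad \dot z=z(\sigma+2+(p-m)y),$$ and under $X=1/x$, $Y=y/x$, $Z=z/x$ (with a time change) it is equivalent to system (S1): $$\dot X=X[(m-1)Y-2X],\quad \dot Y=-Y^2-\tfrac{p-m}{\sigma+2}Y-X-NXY+XZ,\quad \dot Z=Z[(p-1)Y+\sigma X].$$ Limits are taken as the trajectory's parameter tends to $+\infty$. *)

theory Defs
  imports "HOL-Analysis.Analysis" "HOL-Library.Extended_Real"
begin

definition S2_solution ::
  "real \<Rightarrow> nat \<Rightarrow> real \<Rightarrow> real \<Rightarrow> (real \<Rightarrow> real) \<Rightarrow> (real \<Rightarrow> real) \<Rightarrow> (real \<Rightarrow> real)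
     \<Rightarrow> real set \<Rightarrow> bool" where
  "S2_solution m N \<sigma> p x y z D \<longleftrightarrow>
     (\<forall>t\<in>D.
        (x has_real_derivative (x t * (2 - (m - 1) * y t))) (at t) \<and>
        (y has_real_derivative
            (- x t - (real N - 2) * y t + z t - m * (y t)\<^sup>2
             - (p - m) / (\<sigma> + 2) * x t * y t)) (at t) \<and>
        (z has_real_derivative (z t * (\<sigma> + 2 + (p - m) * y t))) (at t))"

definition right_end :: "ereal \<Rightarrow> real filter" where
  "right_end T = (if T = \<infinity> then at_top else at_left (real_of_ereal T))"

definition S2_maximal_solution ::
  "real \<Rightarrow> nat \<Rightarrow> real \<Rightarrow> real \<Rightarrow> (real \<Rightarrow> real) \<Rightarrow> (real \<Rightarrow> real) \<Rightarrow> (real \<Rightarrow> real)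
     \<Rightarrow> ereal \<Rightarrow> bool" where
  "S2_maximal_solution m N \<sigma> p x y z T \<longleftrightarrow>
     S2_solution m N \<sigma> p x y z {t. ereal t < T} \<and>
     \<not> (\<exists>T' x' y' z'. T < T' \<and> S2_solution m N \<sigma> p x' y' z' {t. ereal t < T'} \<and>
          (\<forall>t. ereal t < T \<longrightarrow> x' t = x t \<and> y' t = y t \<and> z' t = z t))"

end

theory Submission
  imports Defs
begin

(* Along l0 the plane z = 0 is invariant, y < 0 and x increases. The deviation w = y + x/N from the
   line y = -x/N solves w' = w g + \<delta> x\<^sup>2/N, where g \<rightarrow> 2 - N < 0 at -\<infinity> and \<delta> = (p - p_F(\<sigma>))/(\<sigma> + 2);
   as w \<rightarrow> 0 at -\<infinity>, w has the sign of \<delta>, and w = 0 identically when p = p_F(\<sigma>).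
   In terms of \<beta> = -Y = -y/x one has \<beta>' = 1 - N\<beta> + x\<beta>(\<beta> - k) with k = (p - m)/(\<sigma> + 2). If p > p_F(\<sigma>)
   then 0 < \<beta> < 1/N and \<beta>' \<le> 1 - \<delta>x\<beta>, so \<beta> \<rightarrow> 0 once x \<rightarrow> \<infinity>; if p < p_F(\<sigma>) then \<beta> > 1/N and
   \<beta>'/\<beta> \<ge> N(-\<delta>)x\<beta> - N, which forces \<beta> \<rightarrow> \<infinity>. The blow-up of x (or of y) that these arguments need
   comes from maximality: a solution that stays bounded up to a finite time can be continued by
   Picard iteration. *)

section \<open>Continuation of bounded solutions of Lipschitz ODEs\<close>

text \<open>The upper limit of integration is clamped to \<open>[t0, t0 + h]\<close>, so that the Picard operator maps
  continuous functions on \<open>\<real>\<close> to bounded ones.\<close>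

definition picard_step ::
    "('a::banach \<Rightarrow> 'a) \<Rightarrow> 'a \<Rightarrow> real \<Rightarrow> real \<Rightarrow> (real \<Rightarrow> 'a) \<Rightarrow> real \<Rightarrow> 'a" where
  "picard_step G u0 t0 h f t = u0 + integral {t0..max t0 (min (t0 + h) t)} (\<lambda>s. G (f s))"

lemma picard_step_bcontfun:
  fixes G :: "'a::banach \<Rightarrow> 'a"
  assumes contG: "continuous_on UNIV G" and bound: "\<And>u. norm (G u) \<le> M"
    and "0 \<le> h" and f: "continuous_on UNIV f"
  shows "picard_step G u0 t0 h f \<in> bcontfun"
proof (rule bcontfun_normI)
  define cl where "cl t = max t0 (min (t0 + h) t)" for t
  have cl: "cl t \<in> {t0..t0+h}" for t using \<open>0 \<le> h\<close> by (auto simp: cl_def)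
  have contGf: "continuous_on S (\<lambda>s. G (f s))" for S
    using continuous_on_compose2[OF contG continuous_on_subset[OF f]] by auto
  have "continuous_on {t0..t0+h} (\<lambda>t. integral {t0..t} (\<lambda>s. G (f s)))"
    by (rule indefinite_integral_continuous_1[OF integrable_continuous_interval[OF contGf]])
  then have "continuous_on UNIV (\<lambda>t. integral {t0..cl t} (\<lambda>s. G (f s)))"
    using continuous_on_compose2[of "{t0..t0+h}" _ UNIV cl] cl
    by (force simp: cl_def intro: continuous_intros)
  then show "continuous_on UNIV (picard_step G u0 t0 h f)"
    unfolding picard_step_def cl_def[symmetric] by (intro continuous_intros)
  fix t
  have "norm (integral {t0..cl t} (\<lambda>s. G (f s))) \<le> M * (cl t - t0)"
    using cl by (intro integral_bound contGf bound) auto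
  also have "\<dots> \<le> \<bar>M\<bar> * h" using cl[of t] by (intro mult_mono) auto
  finally show "norm (picard_step G u0 t0 h f t) \<le> norm u0 + \<bar>M\<bar> * h"
    unfolding picard_step_def cl_def[symmetric] by (meson add_mono norm_triangle_le order_refl)
qed

lemma picard_step_contraction:
  fixes G :: "'a::banach \<Rightarrow> 'a" and f g :: "real \<Rightarrow>\<^sub>C 'a"
  assumes lip: "L-lipschitz_on UNIV G" and "0 \<le> h" "L * h \<le> 1/2"
  shows "dist (picard_step G u0 t0 h f t) (picard_step G u0 t0 h g t) \<le> 1/2 * dist f g"
proof -
  define cl where "cl = max t0 (min (t0 + h) t)"
  have cl: "t0 \<le> cl" "cl \<le> t0 + h" using \<open>0 \<le> h\<close> by (auto simp: cl_def)
  have L: "L \<ge> 0" using lip by (rule lipschitz_on_nonneg)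
  have cont: "continuous_on {t0..cl} (\<lambda>s. G (f s))" "continuous_on {t0..cl} (\<lambda>s. G (g s))"
    using lipschitz_on_continuous_on[OF lip] by (auto intro: continuous_on_compose2)
  have "dist (picard_step G u0 t0 h f t) (picard_step G u0 t0 h g t)
      = norm (integral {t0..cl} (\<lambda>s. G (f s) - G (g s)))"
    by (simp add: picard_step_def cl_def[symmetric] dist_norm integral_diff
        integrable_continuous_interval[OF cont(1)] integrable_continuous_interval[OF cont(2)])
  also have "\<dots> \<le> (L * dist f g) * (cl - t0)"
  proof (rule integral_bound)
    fix s
    have "norm (G (f s) - G (g s)) \<le> L * norm (f s - g s)"
      using lipschitz_onD[OF lip] by (simp add: dist_norm)
    also have "\<dots> \<le> L * dist f g"
      using dist_bounded[of f s g] L by (simp add: dist_norm mult_left_mono)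
    finally show "norm (G (f s) - G (g s)) \<le> L * dist f g" .
  qed (use cl cont in \<open>auto intro: continuous_intros\<close>)
  also have "\<dots> \<le> (L * dist f g) * h" using cl L by (intro mult_left_mono) auto
  also have "\<dots> = (L * h) * dist f g" by simp
  also have "\<dots> \<le> 1/2 * dist f g" using assms(3) by (intro mult_right_mono) auto
  finally show ?thesis .
qed

lemma picard_fixed_point:
  fixes G :: "'a::banach \<Rightarrow> 'a"
  assumes lip: "L-lipschitz_on UNIV G" and bound: "\<And>u. norm (G u) \<le> M"
    and h: "0 < h" "L * h \<le> 1/2"
  obtains g where "continuous_on UNIV g"
    and "\<And>t. t \<in> {t0..t0+h} \<Longrightarrow> g t = u0 + integral {t0..t} (\<lambda>s. G (g s))"
proof -
  define \<Phi> where "\<Phi> f = Bcontfun (picard_step G u0 t0 h (apply_bcontfun f))" for f :: "real \<Rightarrow>\<^sub>C 'a"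
  have \<Phi>_apply: "apply_bcontfun (\<Phi> f) = picard_step G u0 t0 h (apply_bcontfun f)" for f
    unfolding \<Phi>_def using lipschitz_on_continuous_on[OF lip] bound h(1)
    by (intro Bcontfun_inverse picard_step_bcontfun) auto
  have "dist (\<Phi> f) (\<Phi> g) \<le> 1/2 * dist f g" for f g
    using picard_step_contraction[OF lip _ h(2)] h(1) by (intro dist_bound) (simp add: \<Phi>_apply)
  then obtain f0 where f0: "\<Phi> f0 = f0" using banach_fix_type[of "1/2" \<Phi>] by auto
  show ?thesis
  proof
    show "continuous_on UNIV (apply_bcontfun f0)" by simp
    fix t assume "t \<in> {t0..t0+h}"
    then show "f0 t = u0 + integral {t0..t} (\<lambda>s. G (f0 s))"
      using \<Phi>_apply[of f0] f0 by (metis picard_step_def atLeastAtMost_iff max.absorb2 min.absorb2)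
  qed
qed

lemma lipschitz_ode_local_solution:
  fixes G :: "'a::banach \<Rightarrow> 'a"
  assumes lip: "L-lipschitz_on UNIV G" and bound: "\<And>u. norm (G u) \<le> M"
    and h: "0 < h" "L * h \<le> 1/2"
  obtains g where "continuous_on {t0..t0+h} g" and "g t0 = u0"
    and "\<And>t. t \<in> {t0<..<t0+h} \<Longrightarrow> (g has_vector_derivative G (g t)) (at t)"
    and "\<And>t. t \<in> {t0..t0+h} \<Longrightarrow> norm (g t - u0) \<le> M * h"
proof -
  obtain g where contg: "continuous_on UNIV g"
    and g: "\<And>t. t \<in> {t0..t0+h} \<Longrightarrow> g t = u0 + integral {t0..t} (\<lambda>s. G (g s))"
    using picard_fixed_point[OF lip bound h] by blast
  have contGg: "continuous_on S (\<lambda>s. G (g s))" for S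
    using continuous_on_compose2[OF lipschitz_on_continuous_on[OF lip] continuous_on_subset[OF contg]]
    by auto
  show ?thesis
  proof
    show "continuous_on {t0..t0+h} g" using contg by (rule continuous_on_subset) simp
    show "g t0 = u0" using g[of t0] h by simp
  next
    fix t assume t: "t \<in> {t0<..<t0+h}"
    have "((\<lambda>u. integral {t0..u} (\<lambda>s. G (g s))) has_vector_derivative G (g t))
        (at t within {t0<..<t0+h})"
      by (rule has_vector_derivative_within_subset[OF integral_has_vector_derivative[OF contGg,
            where a = t0 and b = "t0 + h"]])
        (use t in auto)
    then have "((\<lambda>t. u0 + integral {t0..t} (\<lambda>s. G (g s))) has_vector_derivative G (g t))
        (at t within {t0<..<t0+h})"
      using has_vector_derivative_add[OF has_vector_derivative_const] by fastforce
    then have "((\<lambda>t. u0 + integral {t0..t} (\<lambda>s. G (g s))) has_vector_derivative G (g t)) (at t)"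
      using at_within_open[of t "{t0<..<t0+h}"] t by simp
    then show "(g has_vector_derivative G (g t)) (at t)"
      by (rule has_vector_derivative_transform_within_open[of _ _ _ "{t0<..<t0+h}"]) (use t g in auto)
  next
    fix t assume t: "t \<in> {t0..t0+h}"
    have "norm (g t - u0) \<le> M * (t - t0)"
      using g[OF t] t by (auto intro!: integral_bound contGg bound)
    also have "\<dots> \<le> M * h"
      using t order_trans[OF norm_ge_zero bound] by (intro mult_left_mono) auto
    finally show "norm (g t - u0) \<le> M * h" .
  qed
qed

lemma gronwall_zero:
  fixes d d' :: "real \<Rightarrow> real"
  assumes "a \<le> b" and "continuous_on {a..b} d"
    and deriv: "\<And>t. t \<in> {a<..<b} \<Longrightarrow> (d has_real_derivative d' t) (at t)"
    and growth: "\<And>t. t \<in> {a<..<b} \<Longrightarrow> d' t \<le> K * d t"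
    and "d a = 0" and nonneg: "\<And>t. d t \<ge> 0"
  shows "d b = 0"
proof -
  define e where "e t = d t * exp (- K * t)" for t
  have "e b \<le> e a"
  proof (rule DERIV_nonpos_imp_decreasing_open[OF \<open>a \<le> b\<close>])
    fix t assume t: "a < t" "t < b"
    have "d' t * exp (- K * t) \<le> K * d t * exp (- K * t)"
      using growth t by (simp add: mult_right_mono)
    then show "\<exists>e'. (e has_real_derivative e') (at t) \<and> e' \<le> 0"
      using deriv[of t] t unfolding e_def
      by (intro exI conjI) (auto intro!: derivative_eq_intros simp: algebra_simps)
  qed (use assms in \<open>auto simp: e_def intro!: continuous_intros\<close>)
  then have "d b \<le> 0" using \<open>d a = 0\<close> by (simp add: e_def mult_le_0_iff)
  with nonneg[of b] show ?thesis by simp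
qed

lemma lipschitz_ode_unique:
  fixes F :: "'a::real_inner \<Rightarrow> 'a" and u v :: "real \<Rightarrow> 'a"
  assumes lip: "L-lipschitz_on S F" and "a \<le> b"
    and cont: "continuous_on {a..b} u" "continuous_on {a..b} v" and "u a = v a"
    and in_S: "\<And>t. t \<in> {a<..<b} \<Longrightarrow> u t \<in> S \<and> v t \<in> S"
    and u': "\<And>t. t \<in> {a<..<b} \<Longrightarrow> (u has_vector_derivative F (u t)) (at t)"
    and v': "\<And>t. t \<in> {a<..<b} \<Longrightarrow> (v has_vector_derivative F (v t)) (at t)"
  shows "u b = v b"
proof -
  define d where "d t = (u t - v t) \<bullet> (u t - v t)" for t
  have "d b = 0"
  proof (rule gronwall_zero[where d = d and a = a and b = b and d' = "\<lambda>t. 2 * ((u t - v t) \<bullet> (F (u t) - F (v t)))" and K = "2 * L"])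
    fix t assume t: "t \<in> {a<..<b}"
    have "((\<lambda>t. u t - v t) has_vector_derivative F (u t) - F (v t)) (at t)"
      using u'[OF t] v'[OF t] by (rule derivative_intros)
    from bounded_bilinear.has_vector_derivative[OF bounded_bilinear_inner this this]
    show "(d has_real_derivative 2 * ((u t - v t) \<bullet> (F (u t) - F (v t)))) (at t)"
      by (simp add: d_def[abs_def] has_real_derivative_iff_has_vector_derivative inner_commute)
    have "(u t - v t) \<bullet> (F (u t) - F (v t)) \<le> norm (u t - v t) * (L * norm (u t - v t))"
      using norm_cauchy_schwarz[of "u t - v t"] lipschitz_onD[OF lip, of "u t" "v t"] in_S[OF t]
      by (smt (verit, best) dist_norm mult_left_mono norm_ge_zero)
    then show "2 * ((u t - v t) \<bullet> (F (u t) - F (v t))) \<le> 2 * L * d t"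
      by (simp add: d_def dot_square_norm power2_eq_square algebra_simps)
  qed (use assms in \<open>auto simp: d_def intro!: continuous_intros\<close>)
  then show ?thesis by (simp add: d_def)
qed

lemma lipschitz_on_compact_convex_extend:
  fixes F :: "'a::euclidean_space \<Rightarrow> 'b::real_normed_vector"
  assumes L: "L-lipschitz_on S F" and S: "compact S" "convex S" "S \<noteq> {}"
  obtains G M where "L-lipschitz_on UNIV G" and "\<And>w. norm (G w) \<le> M"
    and "\<And>w. w \<in> S \<Longrightarrow> G w = F w"
proof -
  have closed: "closed S" using S(1) by (rule compact_imp_closed)
  obtain M where M: "\<And>w. w \<in> S \<Longrightarrow> norm (F w) \<le> M"
    using compact_imp_bounded[OF compact_continuous_image[OF lipschitz_on_continuous_on[OF L] S(1)]]
    by (auto simp: bounded_iff)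
  have proj: "1-lipschitz_on UNIV (closest_point S)"
    by (rule lipschitz_onI) (auto simp: closest_point_lipschitz[OF S(2) closed S(3)])
  have "(L * 1)-lipschitz_on UNIV (F \<circ> closest_point S)"
    by (rule lipschitz_on_compose[OF proj lipschitz_on_subset[OF L]])
       (auto intro: closest_point_in_set[OF closed S(3)])
  then show ?thesis
    by (intro that[of "F \<circ> closest_point S" M])
      (auto simp: M closest_point_in_set[OF closed S(3)] closest_point_self)
qed

lemma ode_solutions_glue:
  fixes F :: "'a::real_normed_vector \<Rightarrow> 'a"
  assumes u': "\<And>t. t < T \<Longrightarrow> (u has_vector_derivative F (u t)) (at t)"
    and g': "\<And>t. t \<in> {t0<..<t1} \<Longrightarrow> (g has_vector_derivative F (g t)) (at t)"
    and "t0 < T" and eq: "\<And>t. t0 < t \<Longrightarrow> t < T \<Longrightarrow> g t = u t" and "t < t1"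
  shows "((\<lambda>t. if t < T then u t else g t) has_vector_derivative
      F (if t < T then u t else g t)) (at t)"
proof (cases "t < T")
  case True
  have "((\<lambda>t. if t < T then u t else g t) has_vector_derivative F (u t)) (at t)"
    by (rule has_vector_derivative_transform_within_open[OF u'[OF True], of "{..<T}"]) (use True in auto)
  then show ?thesis using True by simp
next
  case False
  then have t: "t \<in> {t0<..<t1}" using assms by auto
  have "((\<lambda>t. if t < T then u t else g t) has_vector_derivative F (g t)) (at t)"
    by (rule has_vector_derivative_transform_within_open[OF g'[OF t], of "{t0<..<t1}"])
       (use t eq in auto)
  then show ?thesis using False by simp
qed

lemma bounded_solution_extends:
  fixes F :: "'a::euclidean_space \<Rightarrow> 'a" and u :: "real \<Rightarrow> 'a"
  assumes lip: "\<And>R. \<exists>L. L-lipschitz_on (cball 0 R) F"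
    and u': "\<And>t. t < T \<Longrightarrow> (u has_vector_derivative F (u t)) (at t)"
    and bounded: "\<And>t. t < T \<Longrightarrow> norm (u t) \<le> B"
  obtains T' v where "T < T'" and "\<And>t. t < T' \<Longrightarrow> (v has_vector_derivative F (v t)) (at t)"
    and "\<And>t. t < T \<Longrightarrow> v t = u t"
proof -
  define S where "S = cball (0::'a) (B + 1)"
  have S: "compact S" "convex S" "S \<noteq> {}"
    using order_trans[OF norm_ge_zero bounded, of "T - 1"] by (auto simp: S_def)
  obtain L where L: "L-lipschitz_on S F" using lip unfolding S_def by blast
  then obtain G M where G_lip: "L-lipschitz_on UNIV G" and G_bound: "\<And>w. norm (G w) \<le> M"
    and GF: "\<And>w. w \<in> S \<Longrightarrow> G w = F w"
    using lipschitz_on_compact_convex_extend[OF _ S] by blast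
  have L0: "L \<ge> 0" and M0: "M \<ge> 0"
    using lipschitz_on_nonneg[OF G_lip] order_trans[OF norm_ge_zero G_bound] by auto
  define h where "h = 1 / (2 * L + M + 1)"
  have h: "0 < h" "L * h \<le> 1/2" "M * h \<le> 1"
    using L0 M0 by (auto simp: h_def field_simps)
  define t0 where "t0 = T - h / 2"
  have t0: "t0 < T" "T < t0 + h" using h by (auto simp: t0_def)
  obtain g where g_cont: "continuous_on {t0..t0+h} g" and g_t0: "g t0 = u t0"
    and g': "\<And>t. t \<in> {t0<..<t0+h} \<Longrightarrow> (g has_vector_derivative G (g t)) (at t)"
    and g_near: "\<And>t. t \<in> {t0..t0+h} \<Longrightarrow> norm (g t - u t0) \<le> M * h"
    using lipschitz_ode_local_solution[OF G_lip G_bound h(1,2)] by blast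
  have g_in_S: "g t \<in> S" if "t \<in> {t0..t0+h}" for t
    using g_near[OF that] h(3) bounded[OF t0(1)] norm_triangle_sub[of "g t" "u t0"]
    by (auto simp: S_def)
  have u_cont: "continuous_on {t0..s} u" if "s < T" for s
    using that by (intro continuous_at_imp_continuous_on ballI
        has_vector_derivative_continuous[OF u']) auto
  have g_eq_u: "g s = u s" if s: "t0 \<le> s" "s < T" for s
    by (rule lipschitz_ode_unique[OF L s(1) continuous_on_subset[OF g_cont] u_cont[OF s(2)] g_t0])
       (use s t0 g_in_S GF g' u' in \<open>auto simp: S_def intro: order_trans[OF bounded]\<close>)
  have "(g has_vector_derivative F (g t)) (at t)" if "t \<in> {t0<..<t0+h}" for t
    using g'[OF that] GF g_in_S that by simp
  with t0 g_eq_u show ?thesis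
    by (intro that[of "t0 + h" "\<lambda>t. if t < T then u t else g t"] ode_solutions_glue[OF u']) auto
qed

section \<open>The system (S2) in the plane \<open>z = 0\<close>\<close>

definition S2_planar_field :: "real \<Rightarrow> nat \<Rightarrow> real \<Rightarrow> real \<Rightarrow> real \<times> real \<Rightarrow> real \<times> real" where
  "S2_planar_field m N \<sigma> p = (\<lambda>(x, y). (x * (2 - (m - 1) * y),
      - x - (real N - 2) * y - m * y\<^sup>2 - (p - m) / (\<sigma> + 2) * x * y))"

lemma lipschitz_on_mult_bounded:
  fixes f g :: "'a::metric_space \<Rightarrow> real"
  assumes f: "L-lipschitz_on S f" and g: "M-lipschitz_on S g"
    and "0 \<le> A" "\<And>u. u \<in> S \<Longrightarrow> \<bar>f u\<bar> \<le> A" and "0 \<le> B" "\<And>u. u \<in> S \<Longrightarrow> \<bar>g u\<bar> \<le> B"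
  shows "(A * M + B * L)-lipschitz_on S (\<lambda>u. f u * g u)"
proof (rule lipschitz_onI)
  fix u v assume uv: "u \<in> S" "v \<in> S"
  have "\<bar>f u * g u - f v * g v\<bar> = \<bar>f u * (g u - g v) + g v * (f u - f v)\<bar>"
    by (simp add: algebra_simps)
  also have "\<dots> \<le> \<bar>f u\<bar> * \<bar>g u - g v\<bar> + \<bar>g v\<bar> * \<bar>f u - f v\<bar>"
    by (metis abs_mult abs_triangle_ineq)
  also have "\<dots> \<le> A * (M * dist u v) + B * (L * dist u v)"
    using assms uv lipschitz_onD[OF f uv] lipschitz_onD[OF g uv]
    by (intro add_mono mult_mono) (auto simp: dist_real_def)
  finally show "dist (f u * g u) (f v * g v) \<le> (A * M + B * L) * dist u v"
    by (simp add: dist_real_def algebra_simps)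
qed (use assms lipschitz_on_nonneg[OF f] lipschitz_on_nonneg[OF g] in simp)

lemma S2_planar_field_lipschitz: "\<exists>L. L-lipschitz_on (cball 0 R) (S2_planar_field m N \<sigma> p)"
proof -
  let ?S = "cball (0::real \<times> real) R"
  have x: "1-lipschitz_on ?S fst" and y: "1-lipschitz_on ?S snd"
    by (simp_all add: lipschitz_onI dist_fst_le dist_snd_le)
  have fst_bound: "\<bar>fst u\<bar> \<le> \<bar>R\<bar>" and snd_bound: "\<bar>snd u\<bar> \<le> \<bar>R\<bar>" if "u \<in> ?S" for u
    using that norm_fst_le[of "fst u" "snd u"] norm_snd_le[of "snd u" "fst u"] by auto
  have xy: "(\<bar>R\<bar> * 1 + \<bar>R\<bar> * 1)-lipschitz_on ?S (\<lambda>u. fst u * snd u)"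
    by (rule lipschitz_on_mult_bounded[OF x y abs_ge_zero fst_bound abs_ge_zero snd_bound])
  have yy: "(\<bar>R\<bar> * 1 + \<bar>R\<bar> * 1)-lipschitz_on ?S (\<lambda>u. snd u * snd u)"
    by (rule lipschitz_on_mult_bounded[OF y y abs_ge_zero snd_bound abs_ge_zero snd_bound])
  have field: "S2_planar_field m N \<sigma> p = (\<lambda>u. (2 * fst u - (m - 1) * (fst u * snd u),
      - fst u - (real N - 2) * snd u - m * (snd u * snd u) - (p - m) / (\<sigma> + 2) * (fst u * snd u)))"
    by (auto simp: S2_planar_field_def fun_eq_iff algebra_simps power2_eq_square)
  show ?thesis unfolding field
    by (rule exI, (rule lipschitz_on_Pair lipschitz_on_diff lipschitz_on_minus lipschitz_on_cmult_real x y xy yy)+)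
qed

lemma S2_solution_planar:
  assumes "S2_solution m N \<sigma> p x y z D" and "t \<in> D" and "z t = 0"
  shows "((\<lambda>t. (x t, y t)) has_vector_derivative S2_planar_field m N \<sigma> p (x t, y t)) (at t)"
proof -
  have "(x has_real_derivative x t * (2 - (m - 1) * y t)) (at t)"
    and "(y has_real_derivative
      - x t - (real N - 2) * y t + z t - m * (y t)\<^sup>2 - (p - m) / (\<sigma> + 2) * x t * y t) (at t)"
    using assms(1,2) unfolding S2_solution_def by auto
  from has_vector_derivative_Pair[OF this[unfolded has_real_derivative_iff_has_vector_derivative]]
  show ?thesis using assms(3) by (simp add: S2_planar_field_def)
qed

lemma planar_solution_S2:
  assumes "\<And>t. t \<in> D \<Longrightarrow> (v has_vector_derivative S2_planar_field m N \<sigma> p (v t)) (at t)"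
  shows "S2_solution m N \<sigma> p (\<lambda>t. fst (v t)) (\<lambda>t. snd (v t)) (\<lambda>_. 0) D"
proof -
  have "((\<lambda>t. fst (v t)) has_real_derivative fst (S2_planar_field m N \<sigma> p (v t))) (at t)"
    and "((\<lambda>t. snd (v t)) has_real_derivative snd (S2_planar_field m N \<sigma> p (v t))) (at t)"
    if "t \<in> D" for t
    using bounded_linear.has_vector_derivative[OF bounded_linear_fst assms[OF that]]
      bounded_linear.has_vector_derivative[OF bounded_linear_snd assms[OF that]]
    by (simp_all add: has_real_derivative_iff_has_vector_derivative)
  then show ?thesis
    by (simp add: S2_solution_def S2_planar_field_def case_prod_beta)
qed

lemma S2_maximal_solution_not_bounded:
  assumes sol: "S2_maximal_solution m N \<sigma> p x y z (ereal T0)"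
    and z: "\<And>t. t < T0 \<Longrightarrow> z t = 0"
    and x_bound: "\<And>t. t < T0 \<Longrightarrow> \<bar>x t\<bar> \<le> B" and y_bound: "\<And>t. t < T0 \<Longrightarrow> \<bar>y t\<bar> \<le> B"
  shows False
proof -
  have S: "S2_solution m N \<sigma> p x y z {t. ereal t < ereal T0}"
    using sol by (simp add: S2_maximal_solution_def)
  have u': "((\<lambda>t. (x t, y t)) has_vector_derivative S2_planar_field m N \<sigma> p (x t, y t)) (at t)"
    if "t < T0" for t
    by (rule S2_solution_planar[OF S _ z[OF that]]) (use that in simp)
  have bounded: "norm (x t, y t) \<le> B + B" if "t < T0" for t
    using norm_Pair_le[of "x t" "y t"] x_bound[OF that] y_bound[OF that] by simp
  obtain T1 v where "T0 < T1"
    and v': "\<And>t. t < T1 \<Longrightarrow> (v has_vector_derivative S2_planar_field m N \<sigma> p (v t)) (at t)"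
    and v_eq: "\<And>t. t < T0 \<Longrightarrow> v t = (x t, y t)"
    by (rule bounded_solution_extends[where u = "\<lambda>t. (x t, y t)" and T = T0,
          OF S2_planar_field_lipschitz u' bounded]) (auto intro: that)
  have "S2_solution m N \<sigma> p (\<lambda>t. fst (v t)) (\<lambda>t. snd (v t)) (\<lambda>_. 0) {t. ereal t < ereal T1}"
    using v' by (intro planar_solution_S2) simp
  moreover have "\<forall>t. ereal t < ereal T0 \<longrightarrow> fst (v t) = x t \<and> snd (v t) = y t \<and> 0 = z t"
    using v_eq z by simp
  moreover have "ereal T0 < ereal T1" using \<open>T0 < T1\<close> by simp
  ultimately have "\<exists>T' x' y' z'. ereal T0 < T' \<and> S2_solution m N \<sigma> p x' y' z' {t. ereal t < T'} \<and>
      (\<forall>t. ereal t < ereal T0 \<longrightarrow> x' t = x t \<and> y' t = y t \<and> z' t = z t)"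
    by (intro exI[of _ "ereal T1"] exI[of _ "\<lambda>t. fst (v t)"] exI[of _ "\<lambda>t. snd (v t)"]
        exI[of _ "\<lambda>_. 0"]) simp
  then show False using sol by (simp add: S2_maximal_solution_def)
qed

section \<open>Scalar differential inequalities\<close>

lemma ereal_less_if_le: "a \<le> b \<Longrightarrow> ereal b < T \<Longrightarrow> ereal a < T"
  by (metis ereal_less_eq(3) le_less_trans)

lemma continuous_on_Icc_below:
  assumes "\<And>t. ereal t < T \<Longrightarrow> isCont f t" and "ereal b < T"
  shows "continuous_on {a..b} f"
  using assms ereal_less_if_le[OF _ assms(2)] by (intro continuous_at_imp_continuous_on) auto

lemma DERIV_nonneg_imp_nondecreasing_below:
  fixes f f' :: "real \<Rightarrow> real" and T :: ereal
  assumes "s \<le> t" "ereal t < T"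
    and "\<And>r. s \<le> r \<Longrightarrow> ereal r < T \<Longrightarrow> (f has_real_derivative f' r) (at r)"
    and "\<And>r. s \<le> r \<Longrightarrow> ereal r < T \<Longrightarrow> f' r \<ge> 0"
  shows "f s \<le> f t"
  using assms ereal_less_if_le[OF _ assms(2)] by (intro DERIV_nonneg_imp_nondecreasing[OF assms(1)]) blast

lemma DERIV_nonpos_imp_nonincreasing_below:
  fixes f f' :: "real \<Rightarrow> real" and T :: ereal
  assumes "s \<le> t" "ereal t < T"
    and "\<And>r. s \<le> r \<Longrightarrow> ereal r < T \<Longrightarrow> (f has_real_derivative f' r) (at r)"
    and "\<And>r. s \<le> r \<Longrightarrow> ereal r < T \<Longrightarrow> f' r \<le> 0"
  shows "f t \<le> f s"
  using assms ereal_less_if_le[OF _ assms(2)] by (intro DERIV_nonpos_imp_nonincreasing[OF assms(1)]) blast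

lemma positive_persists:
  fixes f f' :: "real \<Rightarrow> real" and T :: ereal
  assumes deriv: "\<And>t. ereal t < T \<Longrightarrow> (f has_real_derivative f' t) (at t)"
    and t0: "ereal t0 < T" "f t0 > 0"
    and at_zero: "\<And>t. t0 \<le> t \<Longrightarrow> ereal t < T \<Longrightarrow> f t = 0 \<Longrightarrow> f' t > 0"
    and s: "t0 \<le> s" "ereal s < T"
  shows "f s > 0"
proof (rule ccontr)
  assume "\<not> f s > 0"
  have cont: "continuous_on {t0..s} f"
    by (rule continuous_on_Icc_below[OF DERIV_isCont[OF deriv] s(2)])
  define Z where "Z = {t \<in> {t0..s}. f t = 0}"
  have "Z \<noteq> {}" using IVT2'[of f s 0 t0] \<open>\<not> f s > 0\<close> t0 s cont by (force simp: Z_def)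
  moreover have "bdd_below Z" by (auto simp: Z_def bdd_below_def)
  moreover have "closed Z" unfolding Z_def
    by (rule continuous_closed_preimage_constant[OF cont]) simp
  ultimately have "Inf Z \<in> Z" by (rule closed_contains_Inf)
  \<comment> \<open>\<open>r\<close> is the first zero of \<open>f\<close> after \<open>t0\<close>; there \<open>f\<close> increases, so it was negative just before.\<close>
  define r where "r = Inf Z"
  have r: "t0 < r" "r \<le> s" "f r = 0"
    using \<open>Inf Z \<in> Z\<close> t0 by (auto simp: Z_def r_def intro: order.not_eq_order_implies_strict)
  have before: "f t > 0" if t: "t0 \<le> t" "t < r" for t
  proof (rule ccontr)
    assume "\<not> f t > 0"
    then obtain u where "t0 \<le> u" "u \<le> t" "f u = 0"
      using IVT2'[of f t 0 t0] t0 t continuous_on_subset[OF cont, of "{t0..t}"] r by auto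
    then have "u \<in> Z" using t r by (auto simp: Z_def)
    then show False using cInf_lower[OF _ \<open>bdd_below Z\<close>, of u] \<open>u \<le> t\<close> t by (simp add: r_def)
  qed
  have "ereal r < T" using r by (intro ereal_less_if_le[OF _ s(2)]) auto
  then have "f' r > 0" using at_zero r by simp
  then obtain d where d: "d > 0" "\<And>h. h > 0 \<Longrightarrow> h < d \<Longrightarrow> f (r - h) < f r"
    using DERIV_pos_inc_left[OF deriv[OF \<open>ereal r < T\<close>]] by blast
  define h where "h = min d (r - t0) / 2"
  have "h > 0" "h < d" "h < r - t0" using d r by (auto simp: h_def)
  then show False using d(2)[of h] before[of "r - h"] r by simp
qed

lemma positive_near_bot:
  fixes f f' :: "real \<Rightarrow> real" and T :: ereal
  assumes deriv: "\<And>t. ereal t < T \<Longrightarrow> (f has_real_derivative f' t) (at t)"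
    and lim: "(f \<longlongrightarrow> 0) at_bot"
    and rising: "\<And>t. t \<le> t\<^sub>0 \<Longrightarrow> ereal t < T \<Longrightarrow> f t \<le> 0 \<Longrightarrow> f' t > 0"
    and u: "u \<le> t\<^sub>0" "ereal u < T"
  shows "f u > 0"
proof (rule ccontr)
  assume "\<not> f u > 0"
  have left_dec: "\<exists>d>0. \<forall>h>0. h < d \<longrightarrow> f (r - h) < f r" if "r \<le> t\<^sub>0" "ereal r < T" "f r \<le> 0" for r
    using DERIV_pos_inc_left[OF deriv rising] that by blast
  obtain s1 where s1: "s1 \<le> u" "f s1 < 0"
  proof (cases "f u < 0")
    case False
    with \<open>\<not> f u > 0\<close> obtain d where "d > 0" "f (u - d/2) < f u" "f u = 0"
      using left_dec[OF u] by force
    then show ?thesis using that[of "u - d/2"] by simp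
  qed (use that in blast)
  \<comment> \<open>Since \<open>f \<rightarrow> 0\<close> at \<open>-\<infinity>\<close>, the minimum of \<open>f\<close> on some \<open>[t1, s1]\<close> is interior, yet \<open>f\<close> increases there.\<close>
  obtain t1 where t1: "t1 < s1" "\<bar>f t1\<bar> < - f s1"
  proof -
    have "eventually (\<lambda>t. \<bar>f t\<bar> < - f s1) at_bot"
      using lim s1 by (auto simp: tendsto_iff dist_real_def)
    then obtain t' where "\<And>t. t \<le> t' \<Longrightarrow> \<bar>f t\<bar> < - f s1" by (auto simp: eventually_at_bot_linorder)
    then show ?thesis using that[of "min t' (s1 - 1)"] by simp
  qed
  have s1T: "ereal s1 < T" using s1 by (intro ereal_less_if_le[OF _ u(2)]) auto
  have "continuous_on {t1..s1} f"
    by (rule continuous_on_Icc_below[OF DERIV_isCont[OF deriv] s1T])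
  then obtain r where r: "r \<in> {t1..s1}" "\<And>t. t \<in> {t1..s1} \<Longrightarrow> f r \<le> f t"
    using continuous_attains_inf[OF compact_Icc] t1 by (metis atLeastAtMost_iff empty_iff less_eq_real_def)
  have "f r \<le> f s1" using r(2)[of s1] t1 by simp
  then have "r \<noteq> t1" using t1 by auto
  moreover have "t1 \<le> r" "r \<le> s1" using r(1) by auto
  ultimately have r': "t1 < r" "r \<le> t\<^sub>0" "ereal r < T" "f r \<le> 0"
    using s1 u s1T \<open>f r \<le> f s1\<close> ereal_less_if_le[of r s1 T] by auto
  then obtain d where d: "d > 0" "\<And>h. h > 0 \<Longrightarrow> h < d \<Longrightarrow> f (r - h) < f r"
    using left_dec[of r] by blast
  define h where "h = min d (r - t1) / 2"
  have h: "h > 0" "h < d" "h < r - t1" using d r' by (auto simp: h_def)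
  then have "r - h \<in> {t1..s1}" using r by auto
  with h show False using d(2)[of h] r(2)[of "r - h"] by simp
qed

lemma positive_from_limit_at_bot:
  fixes f f' :: "real \<Rightarrow> real" and T :: ereal
  assumes deriv: "\<And>t. ereal t < T \<Longrightarrow> (f has_real_derivative f' t) (at t)"
    and lim: "(f \<longlongrightarrow> 0) at_bot"
    and rising: "\<And>t. t \<le> t\<^sub>0 \<Longrightarrow> ereal t < T \<Longrightarrow> f t \<le> 0 \<Longrightarrow> f' t > 0"
    and at_zero: "\<And>t. ereal t < T \<Longrightarrow> f t = 0 \<Longrightarrow> f' t > 0"
    and s: "ereal s < T"
  shows "f s > 0"
proof (cases "s \<le> t\<^sub>0")
  case True
  then show ?thesis using positive_near_bot[OF deriv lim rising] s by blast
next
  case False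
  then have t\<^sub>0T: "ereal t\<^sub>0 < T" using s by (intro ereal_less_if_le[of t\<^sub>0 s]) auto
  show ?thesis
  proof (rule positive_persists[OF deriv t\<^sub>0T])
    show "f t\<^sub>0 > 0" by (rule positive_near_bot[OF deriv lim rising order_refl t\<^sub>0T])
  qed (use False s at_zero in auto)
qed

lemma linear_ode_positive:
  fixes f g q :: "real \<Rightarrow> real" and T :: ereal
  assumes deriv: "\<And>t. ereal t < T \<Longrightarrow> (f has_real_derivative f t * g t + q t) (at t)"
    and lim: "(f \<longlongrightarrow> 0) at_bot" and g_neg: "eventually (\<lambda>t. g t < 0) at_bot"
    and q_pos: "\<And>t. ereal t < T \<Longrightarrow> q t > 0" and s: "ereal s < T"
  shows "f s > 0"
proof -
  obtain t0 where t0: "\<And>t. t \<le> t0 \<Longrightarrow> g t < 0"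
    using g_neg by (auto simp: eventually_at_bot_linorder)
  show ?thesis
  proof (rule positive_from_limit_at_bot[OF deriv lim _ _ s])
    fix t assume "t \<le> t0" "ereal t < T" "f t \<le> 0"
    then have "f t * g t \<ge> 0" using t0[of t] by (intro mult_nonpos_nonpos) auto
    then show "f t * g t + q t > 0" using q_pos \<open>ereal t < T\<close> by (simp add: add_nonneg_pos)
  qed (use q_pos in auto)
qed

lemma linear_ode_zero_near_bot:
  fixes f g :: "real \<Rightarrow> real" and T :: ereal
  assumes deriv: "\<And>t. ereal t < T \<Longrightarrow> (f has_real_derivative f t * g t) (at t)"
    and lim: "(f \<longlongrightarrow> 0) at_bot" and g_neg: "\<And>t. t \<le> t\<^sub>0 \<Longrightarrow> g t < 0"
    and t: "t \<le> t\<^sub>0" "ereal t < T"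
  shows "f t = 0"
proof -
  \<comment> \<open>Up to \<open>t\<^sub>0\<close> the square \<open>f\<^sup>2\<close> decreases, so it is squeezed by its limit \<open>0\<close> at \<open>-\<infinity>\<close>.\<close>
  have "(f t)\<^sup>2 \<le> (f u)\<^sup>2" if "u \<le> t" for u
  proof (rule DERIV_nonpos_imp_nonincreasing[OF that])
    fix r assume "u \<le> r" "r \<le> t"
    then have "ereal r < T" "g r < 0" using t ereal_less_if_le[OF _ t(2)] g_neg[of r] by auto
    moreover have "2 * g r * (f r)\<^sup>2 \<le> 0" using \<open>g r < 0\<close> by (simp add: mult_nonpos_nonneg)
    ultimately show "\<exists>y. ((\<lambda>t. (f t)\<^sup>2) has_real_derivative y) (at r) \<and> y \<le> 0"
      using deriv[of r] by (auto intro!: exI derivative_eq_intros simp: power2_eq_square)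
  qed
  then have "eventually (\<lambda>u. (f t)\<^sup>2 \<le> (f u)\<^sup>2) at_bot"
    unfolding eventually_at_bot_linorder by blast
  moreover have "((\<lambda>t. (f t)\<^sup>2) \<longlongrightarrow> 0) at_bot" using tendsto_power[OF lim, of 2] by simp
  ultimately have "(f t)\<^sup>2 \<le> 0" using tendsto_lowerbound trivial_limit_at_bot_linorder by blast
  then show ?thesis by simp
qed

lemma linear_ode_zero:
  fixes f g :: "real \<Rightarrow> real" and T :: ereal
  assumes deriv: "\<And>t. ereal t < T \<Longrightarrow> (f has_real_derivative f t * g t) (at t)"
    and lim: "(f \<longlongrightarrow> 0) at_bot" and g_neg: "eventually (\<lambda>t. g t < 0) at_bot"
    and g_cont: "\<And>t. ereal t < T \<Longrightarrow> isCont g t" and s: "ereal s < T"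
  shows "f s = 0"
proof -
  obtain t0 where t0: "\<And>t. t \<le> t0 \<Longrightarrow> g t < 0"
    using g_neg by (auto simp: eventually_at_bot_linorder)
  have early: "f t = 0" if "t \<le> t0" "ereal t < T" for t
    using linear_ode_zero_near_bot[OF deriv lim _ that] t0 by blast
  show ?thesis
  proof (cases "s \<le> t0")
    case False
    \<comment> \<open>Beyond \<open>t0\<close>, Gronwall's inequality for \<open>f\<^sup>2\<close> propagates the zero forward.\<close>
    then have t0T: "ereal t0 < T" using s by (intro ereal_less_if_le[of t0 s]) auto
    have "continuous_on {t0..s} g" by (rule continuous_on_Icc_below[OF g_cont s])
    then obtain r where "\<forall>t\<in>{t0..s}. g t \<le> g r"
      using continuous_attains_sup[of "{t0..s}" g] False by auto
    then have K: "\<And>t. t \<in> {t0..s} \<Longrightarrow> g t \<le> g r" by blast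
    have h': "((\<lambda>t. (f t)\<^sup>2) has_real_derivative 2 * g t * (f t)\<^sup>2) (at t)" if "ereal t < T" for t
      using deriv[OF that] by (auto intro!: derivative_eq_intros simp: power2_eq_square)
    have "(f s)\<^sup>2 = 0"
    proof (rule gronwall_zero[where d = "\<lambda>t. (f t)\<^sup>2" and K = "2 * g r"])
      fix t assume t: "t \<in> {t0<..<s}"
      then have "ereal t < T" by (intro ereal_less_if_le[OF _ s]) auto
      then show "((\<lambda>t. (f t)\<^sup>2) has_real_derivative 2 * g t * (f t)\<^sup>2) (at t)" by (rule h')
      show "2 * g t * (f t)\<^sup>2 \<le> 2 * g r * (f t)\<^sup>2"
        using K[of t] t by (auto intro!: mult_right_mono)
    qed (use False early[OF order_refl t0T] continuous_on_Icc_below[OF DERIV_isCont[OF h'] s] in simp_all)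
    then show ?thesis by simp
  qed (use early s in simp)
qed
section \<open>The trajectory leaving \<open>Q\<^sub>1\<close> in the plane \<open>z = 0\<close>\<close>

locale S2_planar_trajectory =
  fixes m \<sigma> p :: real and N :: nat and x y z :: "real \<Rightarrow> real" and T :: ereal
  assumes hm: "m > 1" and h\<sigma>: "\<sigma> > 0" and hp: "p > m" and hN: "N \<ge> 3"
    and sol: "S2_maximal_solution m N \<sigma> p x y z T"
    and pos: "\<forall>t. ereal t < T \<longrightarrow> x t > 0 \<and> z t = 0"
    and from_Q1: "((\<lambda>t. (x t, y t, z t)) \<longlongrightarrow> (0, 0, 0)) at_bot"
begin

abbreviation "a \<equiv> m - 1"
abbreviation "c \<equiv> real N - 2"
abbreviation "n \<equiv> real N"

definition k :: real where "k = (p - m) / (\<sigma> + 2)"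

lemma x_pos: "ereal t < T \<Longrightarrow> x t > 0"
  using pos by blast

lemma z_zero: "ereal t < T \<Longrightarrow> z t = 0"
  using pos by blast

lemma k_pos: "k > 0"
  using hp h\<sigma> by (simp add: k_def)

lemma domain_nonempty: "\<exists>t. ereal t < T"
proof (rule ccontr)
  assume none: "\<nexists>t. ereal t < T"
  then have "T < \<infinity>" using not_le[of T "ereal 0"] by auto
  moreover have "S2_solution m N \<sigma> p (\<lambda>_. 0) (\<lambda>_. 0) (\<lambda>_. 0) {t. ereal t < \<infinity>}"
    by (simp add: S2_solution_def)
  ultimately have "\<exists>T' x' y' z'. T < T' \<and> S2_solution m N \<sigma> p x' y' z' {t. ereal t < T'} \<and>
      (\<forall>t. ereal t < T \<longrightarrow> x' t = x t \<and> y' t = y t \<and> z' t = z t)"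
    using none by blast
  then show False using sol by (simp add: S2_maximal_solution_def)
qed

lemma solution: "S2_solution m N \<sigma> p x y z {t. ereal t < T}"
  using sol by (simp add: S2_maximal_solution_def)

lemma x_deriv: "ereal t < T \<Longrightarrow> (x has_real_derivative x t * (2 - a * y t)) (at t)"
  using solution by (simp add: S2_solution_def)

lemma y_deriv:
  assumes "ereal t < T"
  shows "(y has_real_derivative - x t - c * y t - m * (y t)\<^sup>2 - k * x t * y t) (at t)"
proof -
  have "(y has_real_derivative - x t - c * y t + z t - m * (y t)\<^sup>2 - k * x t * y t) (at t)"
    using solution assms by (simp add: S2_solution_def k_def)
  then show ?thesis using z_zero[OF assms] by simp
qed

lemma x_tendsto_0: "(x \<longlongrightarrow> 0) at_bot"
  using tendsto_fst[OF from_Q1] by simp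

lemma y_tendsto_0: "(y \<longlongrightarrow> 0) at_bot"
  using tendsto_fst[OF tendsto_snd[OF from_Q1]] by simp

lemma y_neg:
  assumes "ereal t < T"
  shows "y t < 0"
proof -
  have rise: "x s + c * y s + m * (y s)\<^sup>2 + k * x s * y s > 0" if "ereal s < T" "y s \<ge> 0" for s
  proof -
    have "c * y s \<ge> 0" "m * (y s)\<^sup>2 \<ge> 0" using that hm hN by simp_all
    moreover have "k * x s * y s \<ge> 0"
      using that(2) k_pos x_pos[OF that(1)] by (intro mult_nonneg_nonneg) auto
    ultimately show ?thesis using x_pos[OF that(1)] by linarith
  qed
  have lim: "((\<lambda>t. - y t) \<longlongrightarrow> 0) at_bot" using tendsto_minus[OF y_tendsto_0] by simp
  have "- y t > 0"
  proof (rule positive_from_limit_at_bot[where t\<^sub>0 = 0, OF DERIV_minus[OF y_deriv] lim _ _ assms])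
    fix s assume "ereal s < T" "- y s \<le> 0"
    then show "0 < - (- x s - c * y s - m * (y s)\<^sup>2 - k * x s * y s)" using rise[of s] by linarith
  next
    fix s assume "ereal s < T" "- y s = 0"
    then show "0 < - (- x s - c * y s - m * (y s)\<^sup>2 - k * x s * y s)" using rise[of s] by linarith
  qed
  then show ?thesis by simp
qed

lemma x_deriv_ge: "ereal t < T \<Longrightarrow> x t * (2 - a * y t) \<ge> 2 * x t"
  using x_pos[of t] y_neg[of t] hm by (simp add: algebra_simps mult_nonpos_nonneg)

lemma x_mono: "s \<le> t \<Longrightarrow> ereal t < T \<Longrightarrow> x s \<le> x t"
proof (rule DERIV_nonneg_imp_nondecreasing_below[OF _ _ x_deriv])
  fix r assume "ereal r < T"
  then show "x r * (2 - a * y r) \<ge> 0" using x_deriv_ge[of r] x_pos[of r] by linarith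
qed

lemma right_end_neq_bot: "right_end T \<noteq> bot"
  by (simp add: right_end_def)

lemma eventually_after:
  assumes "ereal t1 < T"
  shows "eventually (\<lambda>t. t1 < t \<and> ereal t < T) (right_end T)"
proof (cases T)
  case (real T0)
  with assms show ?thesis
    using eventually_at_left_real[of t1 T0] by (auto simp: right_end_def elim!: eventually_mono)
qed (use assms in \<open>auto simp: right_end_def eventually_gt_at_top\<close>)

lemma eventually_in_domain: "eventually (\<lambda>t. ereal t < T) (right_end T)"
proof -
  obtain t1 where "ereal t1 < T" using domain_nonempty by blast
  from eventually_after[OF this] show ?thesis by (rule eventually_mono) simp
qed

lemma obtain_later_time:
  assumes "eventually P (right_end T)" and "ereal t1 < T"
  obtains t where "P t" "t1 < t" "ereal t < T"
  using eventually_happens'[OF right_end_neq_bot eventually_conj[OF assms(1) eventually_after[OF assms(2)]]]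
  by blast

lemma x_tendsto_infinity_if_T_infinite:
  assumes "T = \<infinity>"
  shows "filterlim x at_top (right_end T)"
proof -
  have x0: "x 0 > 0" using x_pos assms by simp
  \<comment> \<open>\<open>x' \<ge> 2 x \<ge> 2 x(0)\<close> after time \<open>0\<close>.\<close>
  have lin: "x 0 + 2 * x 0 * t \<le> x t" if "0 \<le> t" for t
  proof -
    have "(\<lambda>s. x s - 2 * x 0 * s) 0 \<le> (\<lambda>s. x s - 2 * x 0 * s) t"
    proof (rule DERIV_nonneg_imp_nondecreasing[OF that])
      fix r assume "0 \<le> r" "r \<le> t"
      then have "x 0 \<le> x r" using x_mono assms by simp
      then show "\<exists>y. ((\<lambda>s. x s - 2 * x 0 * s) has_real_derivative y) (at r) \<and> y \<ge> 0"
        using x_deriv[of r] x_deriv_ge[of r] assms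
        by (intro exI conjI) (auto intro!: derivative_eq_intros)
    qed
    then show ?thesis by simp
  qed
  have "eventually (\<lambda>t. 2 * x 0 * t \<le> x t) at_top"
  proof (rule eventually_mono[OF eventually_ge_at_top[of 0]])
    fix t :: real assume "0 \<le> t"
    then show "2 * x 0 * t \<le> x t" using lin[of t] x0 by linarith
  qed
  moreover have "filterlim (\<lambda>t. 2 * x 0 * t) at_top at_top"
    using x0 by (intro filterlim_tendsto_pos_mult_at_top[OF tendsto_const] filterlim_ident) auto
  ultimately show ?thesis
    using assms by (simp add: right_end_def filterlim_at_top_mono)
qed

lemma x_tendsto_infinity_or_bounded:
  "filterlim x at_top (right_end T) \<or> (\<exists>T0 B. T = ereal T0 \<and> (\<forall>t<T0. x t \<le> B))"
proof (cases T)
  case (real T0)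
  show ?thesis
  proof (cases "\<exists>B. \<forall>t<T0. x t \<le> B")
    case False
    have "eventually (\<lambda>t. B \<le> x t) (at_left T0)" for B
    proof -
      obtain t1 where t1: "t1 < T0" "x t1 > B" using False by (meson not_le)
      show ?thesis
      proof (rule eventually_mono[OF eventually_at_left_real[OF t1(1)]])
        fix t assume "t \<in> {t1<..<T0}"
        then show "B \<le> x t" using x_mono[of t1 t] t1 real by simp
      qed
    qed
    then show ?thesis using real by (simp add: right_end_def filterlim_at_top)
  qed (use real in blast)
next
  case MInf
  then show ?thesis using domain_nonempty by simp
qed (use x_tendsto_infinity_if_T_infinite in simp)

lemma x_tendsto_infinity:
  assumes y_bound: "\<And>t. ereal t < T \<Longrightarrow> \<bar>y t\<bar> \<le> x t"
  shows "filterlim x at_top (right_end T)"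
proof -
  have False if T0: "T = ereal T0" and B: "\<forall>t<T0. x t \<le> B" for T0 B
  proof (rule S2_maximal_solution_not_bounded[where B = B])
    show "S2_maximal_solution m N \<sigma> p x y z (ereal T0)" using sol T0 by simp
    fix t assume t: "t < T0"
    then have "ereal t < T" using T0 by simp
    then show "z t = 0" "\<bar>x t\<bar> \<le> B" "\<bar>y t\<bar> \<le> B"
      using z_zero x_pos y_bound B t by fastforce+
  qed
  then show ?thesis using x_tendsto_infinity_or_bounded by blast
qed

text \<open>\<open>w = 0\<close> is the line \<open>y = -x/N\<close> of the critical case \<open>p = p\<^sub>F(\<sigma>)\<close>.\<close>

definition w :: "real \<Rightarrow> real" where "w t = y t + x t / n"

definition \<delta> :: real where "\<delta> = k - 1 / n"

definition w_rate :: "real \<Rightarrow> real" where "w_rate t = - c - m * w t + (m / n - \<delta>) * x t"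

lemma delta_eq: "\<delta> = (p - (m + (\<sigma> + 2) / n)) / (\<sigma> + 2)"
  using h\<sigma> hN by (simp add: \<delta>_def k_def field_simps)

lemma w_deriv:
  assumes "ereal t < T"
  shows "(w has_real_derivative w t * w_rate t + \<delta> * (x t)\<^sup>2 / n) (at t)"
proof -
  have ident: "(- X - (l - 2) * Y - m * Y\<^sup>2 - K * X * Y) + X * (2 - a * Y) / l
      = (Y + X / l) * (- (l - 2) - m * (Y + X / l) + (m / l - (K - 1 / l)) * X)
        + (K - 1 / l) * X\<^sup>2 / l"
    if "l \<noteq> 0" for X Y K l :: real
    using that by (simp add: field_simps power2_eq_square)
  have "(w has_real_derivative (- x t - c * y t - m * (y t)\<^sup>2 - k * x t * y t) + x t * (2 - a * y t) / n)
      (at t)"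
    unfolding w_def[abs_def] by (rule DERIV_add[OF y_deriv[OF assms] DERIV_cdivide[OF x_deriv[OF assms]]])
  moreover have "(- x t - c * y t - m * (y t)\<^sup>2 - k * x t * y t) + x t * (2 - a * y t) / n
      = w t * w_rate t + \<delta> * (x t)\<^sup>2 / n"
    unfolding w_def w_rate_def \<delta>_def by (rule ident) (use hN in simp)
  ultimately show ?thesis by simp
qed

lemma w_tendsto_0: "(w \<longlongrightarrow> 0) at_bot"
  using tendsto_add[OF y_tendsto_0 tendsto_divide[OF x_tendsto_0 tendsto_const, of n]] hN
  by (simp add: w_def[abs_def])

lemma w_rate_eventually_neg: "eventually (\<lambda>t. w_rate t < 0) at_bot"
proof -
  have "(w_rate \<longlongrightarrow> - c - m * 0 + (m / n - \<delta>) * 0) at_bot"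
    unfolding w_rate_def[abs_def] by (intro tendsto_intros w_tendsto_0 x_tendsto_0)
  then show ?thesis using hN by (intro order_tendstoD(2)) auto
qed

lemma w_pos_if_delta_pos:
  assumes "\<delta> > 0" "ereal t < T"
  shows "w t > 0"
proof (rule linear_ode_positive[OF w_deriv w_tendsto_0 w_rate_eventually_neg _ assms(2)])
  fix s assume "ereal s < T"
  then show "\<delta> * (x s)\<^sup>2 / n > 0" using assms(1) x_pos[of s] hN by simp
qed

lemma w_neg_if_delta_neg:
  assumes "\<delta> < 0" "ereal t < T"
  shows "w t < 0"
proof -
  have "- w t > 0"
  proof (rule linear_ode_positive[OF _ _ w_rate_eventually_neg _ assms(2)])
    fix s assume s: "ereal s < T"
    show "((\<lambda>t. - w t) has_real_derivative (- w s) * w_rate s + (- \<delta>) * (x s)\<^sup>2 / n) (at s)"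
      using DERIV_minus[OF w_deriv[OF s]] by (simp add: algebra_simps)
    have "(- \<delta>) * (x s)\<^sup>2 > 0" using assms(1) x_pos[OF s] by (intro mult_pos_pos) auto
    then show "(- \<delta>) * (x s)\<^sup>2 / n > 0" using hN by (intro divide_pos_pos) auto
  qed (use tendsto_minus[OF w_tendsto_0] in simp)
  then show ?thesis by simp
qed

lemma w_zero_if_delta_zero:
  assumes "\<delta> = 0" "ereal t < T"
  shows "w t = 0"
proof (rule linear_ode_zero[OF _ w_tendsto_0 w_rate_eventually_neg _ assms(2)])
  show "(w has_real_derivative w s * w_rate s) (at s)" if "ereal s < T" for s
    using w_deriv[OF that] assms(1) by simp
  show "isCont w_rate s" if "ereal s < T" for s
    unfolding w_rate_def[abs_def] w_def[abs_def]
    using DERIV_isCont[OF x_deriv[OF that]] DERIV_isCont[OF y_deriv[OF that]] hN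
    by (intro continuous_intros) auto
qed

lemma delta_zero_iff: "\<delta> = 0 \<longleftrightarrow> p = m + (\<sigma> + 2) / n"
  using h\<sigma> by (simp add: delta_eq)

lemma delta_pos_iff: "\<delta> > 0 \<longleftrightarrow> p > m + (\<sigma> + 2) / n"
  using h\<sigma> by (simp add: delta_eq zero_less_divide_iff)

lemma delta_neg_iff: "\<delta> < 0 \<longleftrightarrow> p < m + (\<sigma> + 2) / n"
  using h\<sigma> by (simp add: delta_eq divide_less_0_iff)

lemma z_over_x_tendsto_0: "((\<lambda>t. z t / x t) \<longlongrightarrow> 0) (right_end T)"
  by (rule tendsto_eventually) (use eventually_in_domain in \<open>auto elim!: eventually_mono simp: z_zero\<close>)

lemma inverse_x_tendsto_0:
  "filterlim x at_top (right_end T) \<Longrightarrow> ((\<lambda>t. 1 / x t) \<longlongrightarrow> 0) (right_end T)"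
  using tendsto_inverse_0_at_top by (simp add: inverse_eq_divide)

lemma x_tendsto_infinity_if_y_above_line:
  assumes "\<And>t. ereal t < T \<Longrightarrow> - y t \<le> x t / n"
  shows "filterlim x at_top (right_end T)"
proof (rule x_tendsto_infinity)
  fix t assume t: "ereal t < T"
  have "x t / n \<le> x t" using x_pos[OF t] hN by (simp add: divide_le_eq)
  then show "\<bar>y t\<bar> \<le> x t" using assms[OF t] y_neg[OF t] by simp
qed

lemma x_takes_value:
  assumes x_inf: "filterlim x at_top (right_end T)" and s: "s > 0"
  obtains t where "ereal t < T" "x t = s"
proof -
  \<comment> \<open>\<open>x\<close> runs continuously from \<open>0\<close> (at \<open>-\<infinity>\<close>) to \<open>\<infinity>\<close>.\<close>
  obtain t0 where "ereal t0 < T" using domain_nonempty by blast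
  obtain t2 where t2: "s \<le> x t2" "ereal t2 < T"
    using obtain_later_time[OF x_inf[unfolded filterlim_at_top, rule_format, of s] \<open>ereal t0 < T\<close>]
    by blast
  obtain t1 where t1: "x t1 < s" "t1 \<le> t2"
    using order_tendstoD(2)[OF x_tendsto_0 s] unfolding eventually_at_bot_linorder
    by (metis min.cobounded1 min.cobounded2)
  then obtain t where t: "t1 \<le> t" "t \<le> t2" "x t = s"
    using IVT'[of x t1 s t2] t2 continuous_on_Icc_below[OF DERIV_isCont[OF x_deriv] t2(2)]
    by auto
  have "ereal t < T" using t(2) by (rule ereal_less_if_le[OF _ t2(2)])
  then show ?thesis using t(3) by (rule that)
qed

lemma critical_trajectory:
  assumes "p = m + (\<sigma> + 2) / n"
  shows "{(x t, y t, z t) | t. ereal t < T} = {(s, - s / n, 0) | s. s > 0}"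
    and "((\<lambda>t. (1 / x t, y t / x t, z t / x t)) \<longlongrightarrow> (0, - (p - m) / (\<sigma> + 2), 0)) (right_end T)"
proof -
  have "\<delta> = 0" using delta_zero_iff assms by blast
  have on_line: "y t = - x t / n" if "ereal t < T" for t
    using w_zero_if_delta_zero[OF \<open>\<delta> = 0\<close> that] hN by (simp add: w_def field_simps)
  have x_inf: "filterlim x at_top (right_end T)"
    using on_line by (intro x_tendsto_infinity_if_y_above_line) simp
  show "{(x t, y t, z t) | t. ereal t < T} = {(s, - s / n, 0) | s. s > 0}"
  proof (intro equalityI subsetI)
    fix q :: "real \<times> real \<times> real" assume "q \<in> {(x t, y t, z t) | t. ereal t < T}"
    then show "q \<in> {(s, - s / n, 0) | s. s > 0}" using on_line x_pos z_zero by auto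
  next
    fix q :: "real \<times> real \<times> real" assume "q \<in> {(s, - s / n, 0) | s. s > 0}"
    then obtain s where s: "s > 0" "q = (s, - s / n, 0)" by blast
    then obtain t where "ereal t < T" "x t = s" using x_takes_value[OF x_inf] by blast
    then show "q \<in> {(x t, y t, z t) | t. ereal t < T}" using s on_line z_zero by force
  qed
  have "eventually (\<lambda>t. y t / x t = - (p - m) / (\<sigma> + 2)) (right_end T)"
    using eventually_in_domain
  proof (rule eventually_mono)
    fix t assume "ereal t < T"
    then have "y t / x t = - (1 / n)" using on_line x_pos[of t] by simp
    moreover have "- (p - m) / (\<sigma> + 2) = - (1 / n)" using assms h\<sigma> hN by (simp add: field_simps)
    ultimately show "y t / x t = - (p - m) / (\<sigma> + 2)" by (simp only:)
  qed
  then have "((\<lambda>t. y t / x t) \<longlongrightarrow> - (p - m) / (\<sigma> + 2)) (right_end T)"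
    by (rule tendsto_eventually)
  then show "((\<lambda>t. (1 / x t, y t / x t, z t / x t)) \<longlongrightarrow> (0, - (p - m) / (\<sigma> + 2), 0)) (right_end T)"
    by (intro tendsto_Pair inverse_x_tendsto_0 x_inf z_over_x_tendsto_0)
qed

text \<open>In the coordinates of (S1), \<open>\<beta> = -Y\<close>.\<close>

definition \<beta> :: "real \<Rightarrow> real" where "\<beta> t = - y t / x t"

definition \<beta>_deriv :: "real \<Rightarrow> real" where "\<beta>_deriv t = 1 - n * \<beta> t + x t * \<beta> t * (\<beta> t - k)"

lemma beta_has_deriv:
  assumes "ereal t < T"
  shows "(\<beta> has_real_derivative \<beta>_deriv t) (at t)"
proof -
  have ident: "((- (- X - (l - 2) * Y - m * Y\<^sup>2 - K * X * Y)) * X - (- Y) * (X * (2 - a * Y))) / (X * X)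
      = 1 - l * (- Y / X) + X * (- Y / X) * ((- Y / X) - K)" if "X \<noteq> 0" for X Y K l :: real
    using that by (simp add: field_simps power2_eq_square)
  have "x t \<noteq> 0" using x_pos[OF assms] by simp
  have "((\<lambda>t. - y t / x t) has_real_derivative
      ((- (- x t - c * y t - m * (y t)\<^sup>2 - k * x t * y t)) * x t - (- y t) * (x t * (2 - a * y t)))
        / (x t * x t)) (at t)"
    by (rule DERIV_divide[OF DERIV_minus[OF y_deriv[OF assms]] x_deriv[OF assms] \<open>x t \<noteq> 0\<close>])
  moreover have "((- (- x t - c * y t - m * (y t)\<^sup>2 - k * x t * y t)) * x t - (- y t) * (x t * (2 - a * y t)))
        / (x t * x t) = \<beta>_deriv t"
    unfolding \<beta>_deriv_def \<beta>_def by (rule ident) fact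
  ultimately show ?thesis unfolding \<beta>_def[abs_def] by simp
qed

lemma beta_pos: "ereal t < T \<Longrightarrow> \<beta> t > 0"
  using x_pos[of t] y_neg[of t] by (simp add: \<beta>_def divide_neg_pos)

lemma y_eq_beta: "ereal t < T \<Longrightarrow> y t = - \<beta> t * x t"
  using x_pos[of t] by (simp add: \<beta>_def)

lemma ln_x_has_deriv:
  assumes "ereal t < T"
  shows "((\<lambda>t. ln (x t)) has_real_derivative 2 - a * y t) (at t)"
proof -
  have "((\<lambda>t. ln (x t)) has_real_derivative inverse (x t) * (x t * (2 - a * y t))) (at t)"
    by (rule DERIV_chain2[OF DERIV_ln[OF x_pos[OF assms]] x_deriv[OF assms]])
  moreover have "inverse (x t) * (x t * (2 - a * y t)) = 2 - a * y t"
    using x_pos[OF assms] by (simp add: field_simps)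
  ultimately show ?thesis by simp
qed

lemma beta_less_if_delta_pos: "\<delta> > 0 \<Longrightarrow> ereal t < T \<Longrightarrow> \<beta> t < 1 / n"
  using w_pos_if_delta_pos[of t] x_pos[of t] hN
  by (simp add: w_def \<beta>_def divide_simps mult.commute)

lemma beta_deriv_le_if_delta_pos:
  assumes "\<delta> > 0" "ereal t < T"
  shows "\<beta>_deriv t \<le> 1 - \<delta> * x t * \<beta> t"
proof -
  have "x t * \<beta> t * (\<beta> t - k) \<le> x t * \<beta> t * (- \<delta>)"
    using beta_less_if_delta_pos[OF assms] x_pos[OF assms(2)] beta_pos[OF assms(2)]
    by (intro mult_left_mono) (auto simp: \<delta>_def)
  moreover have "n * \<beta> t \<ge> 0" using beta_pos[OF assms(2)] by simp
  ultimately show ?thesis by (simp add: \<beta>_deriv_def algebra_simps)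
qed

lemma x_tendsto_infinity_if_delta_pos:
  assumes "\<delta> > 0"
  shows "filterlim x at_top (right_end T)"
proof (rule x_tendsto_infinity_if_y_above_line)
  fix t assume "ereal t < T"
  then show "- y t \<le> x t / n" using w_pos_if_delta_pos[OF assms \<open>ereal t < T\<close>] unfolding w_def by linarith
qed

lemma beta_log_x_deriv_nonpos:
  assumes \<delta>: "\<delta> > 0" and \<epsilon>: "\<epsilon> > 0" and r: "ereal r < T" "\<epsilon> \<le> \<beta> r"
    and large: "1 \<le> x r" "2 \<le> \<delta> * \<epsilon> * x r"
  shows "\<beta>_deriv r + \<delta> * \<epsilon> / (2 * (a / n + 2)) * (2 - a * y r) \<le> 0"
proof -
  define C where "C = a / n + 2"
  have C: "C > 0" using hm hN by (simp add: C_def add_pos_pos)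
  have "\<delta> * \<epsilon> * x r \<le> \<delta> * \<beta> r * x r"
    using r(2) \<delta> x_pos[OF r(1)] by (intro mult_right_mono mult_left_mono) auto
  then have A: "\<beta>_deriv r \<le> 1 - \<delta> * \<epsilon> * x r"
    using beta_deriv_le_if_delta_pos[OF \<delta> r(1)] by (simp add: ac_simps)
  have "- a * y r = a * \<beta> r * x r" using y_eq_beta[OF r(1)] by (simp add: algebra_simps)
  also have "\<dots> \<le> a * (1 / n) * x r"
    using beta_less_if_delta_pos[OF \<delta> r(1)] hm x_pos[OF r(1)]
    by (intro mult_right_mono mult_left_mono) auto
  finally have "- a * y r \<le> a * (1 / n) * x r" .
  moreover have "C * x r = a * (1 / n) * x r + 2 * x r" by (simp add: C_def algebra_simps)
  ultimately have "2 - a * y r \<le> C * x r" using large(1) by linarith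
  then have "\<delta> * \<epsilon> / (2 * C) * (2 - a * y r) \<le> \<delta> * \<epsilon> / (2 * C) * (C * x r)"
    using \<delta> \<epsilon> C by (intro mult_left_mono) auto
  also have "\<dots> = \<delta> * \<epsilon> * x r / 2" using C by (simp add: field_simps)
  finally have "\<delta> * \<epsilon> / (2 * C) * (2 - a * y r) \<le> \<delta> * \<epsilon> * x r / 2" .
  then show ?thesis using A large(2) unfolding C_def by linarith
qed

lemma beta_dips_below:
  assumes \<delta>: "\<delta> > 0" and \<epsilon>: "\<epsilon> > 0" and t1: "ereal t1 < T"
    and large: "1 \<le> x t1" "2 \<le> \<delta> * \<epsilon> * x t1"
  shows "\<exists>t. t1 \<le> t \<and> ereal t < T \<and> \<beta> t < \<epsilon>"
proof (rule ccontr)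
  assume "\<not> ?thesis"
  then have above: "\<epsilon> \<le> \<beta> t" if "t1 \<le> t" "ereal t < T" for t
    using that not_le by blast
  \<comment> \<open>While \<open>\<beta> \<ge> \<epsilon>\<close>, \<open>\<beta> + \<eta> ln x\<close> decreases, which contradicts \<open>x \<rightarrow> \<infinity>\<close>.\<close>
  define \<eta> where "\<eta> = \<delta> * \<epsilon> / (2 * (a / n + 2))"
  have \<eta>: "\<eta> > 0" using \<delta> \<epsilon> hm hN by (simp add: \<eta>_def add_pos_pos)
  define \<Phi> where "\<Phi> t = \<beta> t + \<eta> * ln (x t)" for t
  have \<Phi>_le: "\<Phi> t \<le> \<Phi> t1" if "t1 \<le> t" "ereal t < T" for t
  proof (rule DERIV_nonpos_imp_nonincreasing_below[OF that])
    fix r assume r: "t1 \<le> r" "ereal r < T"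
    show "(\<Phi> has_real_derivative \<beta>_deriv r + \<eta> * (2 - a * y r)) (at r)"
      unfolding \<Phi>_def[abs_def] by (intro DERIV_add beta_has_deriv DERIV_cmult ln_x_has_deriv r)
    have "\<delta> * \<epsilon> * x t1 \<le> \<delta> * \<epsilon> * x r"
      using x_mono[OF r] \<delta> \<epsilon> by (intro mult_left_mono) auto
    then show "\<beta>_deriv r + \<eta> * (2 - a * y r) \<le> 0"
      unfolding \<eta>_def using x_mono[OF r] large
      by (intro beta_log_x_deriv_nonpos[OF \<delta> \<epsilon> r(2) above[OF r]]) auto
  qed
  have "eventually (\<lambda>t. exp (\<Phi> t1 / \<eta>) < x t) (right_end T)"
    using x_tendsto_infinity_if_delta_pos[OF \<delta>] by (simp add: filterlim_at_top_dense)
  then obtain t where t: "exp (\<Phi> t1 / \<eta>) < x t" "t1 < t" "ereal t < T"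
    by (rule obtain_later_time[OF _ t1])
  have "\<eta> * ln (x t) \<le> \<Phi> t1" using \<Phi>_le[of t] t beta_pos[of t] by (simp add: \<Phi>_def)
  then have "ln (x t) \<le> \<Phi> t1 / \<eta>" using \<eta> by (simp add: field_simps mult.commute)
  then have "exp (ln (x t)) \<le> exp (\<Phi> t1 / \<eta>)" by simp
  then have "x t \<le> exp (\<Phi> t1 / \<eta>)" using x_pos[OF t(3)] by simp
  with t show False by simp
qed

lemma beta_stays_below:
  assumes \<delta>: "\<delta> > 0" and t2: "ereal t2 < T" "\<beta> t2 < \<epsilon>" "2 \<le> \<delta> * \<epsilon> * x t2"
    and s: "t2 \<le> s" "ereal s < T"
  shows "\<beta> s < \<epsilon>"
proof -
  have "\<epsilon> - \<beta> s > 0"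
  proof (rule positive_persists[OF _ t2(1) _ _ s])
    fix t assume t: "ereal t < T"
    show "((\<lambda>t. \<epsilon> - \<beta> t) has_real_derivative - \<beta>_deriv t) (at t)"
      using DERIV_diff[OF DERIV_const beta_has_deriv[OF t]] by simp
  next
    fix t assume t: "t2 \<le> t" "ereal t < T" "\<epsilon> - \<beta> t = 0"
    have "\<delta> * \<epsilon> * x t2 \<le> \<delta> * \<epsilon> * x t"
      using x_mono[OF t(1,2)] \<delta> t(3) beta_pos[OF t(2)] by (intro mult_left_mono) auto
    then show "- \<beta>_deriv t > 0"
      using beta_deriv_le_if_delta_pos[OF \<delta> t(2)] t(3) t2(3) by (simp add: ac_simps)
  qed (use t2 in simp)
  then show ?thesis by simp
qed

lemma beta_tendsto_0:
  assumes \<delta>: "\<delta> > 0"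
  shows "(\<beta> \<longlongrightarrow> 0) (right_end T)"
proof (rule tendstoI)
  fix \<epsilon> :: real assume \<epsilon>: "\<epsilon> > 0"
  define X where "X = max 1 (2 / (\<delta> * \<epsilon>))"
  obtain t0 where "ereal t0 < T" using domain_nonempty by blast
  have "eventually (\<lambda>t. X \<le> x t) (right_end T)"
    using x_tendsto_infinity_if_delta_pos[OF \<delta>] by (simp add: filterlim_at_top)
  then obtain t1 where t1: "X \<le> x t1" "t0 < t1" "ereal t1 < T"
    by (rule obtain_later_time[OF _ \<open>ereal t0 < T\<close>])
  have "2 / (\<delta> * \<epsilon>) \<le> x t1" using t1(1) by (simp add: X_def)
  then have large: "1 \<le> x t1" "2 \<le> \<delta> * \<epsilon> * x t1"
    using t1(1) \<delta> \<epsilon> by (auto simp: X_def field_simps)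
  obtain t2 where t2: "t1 \<le> t2" "ereal t2 < T" "\<beta> t2 < \<epsilon>"
    using beta_dips_below[OF \<delta> \<epsilon> t1(3) large] by blast
  have "\<delta> * \<epsilon> * x t1 \<le> \<delta> * \<epsilon> * x t2"
    using x_mono[OF t2(1,2)] \<delta> \<epsilon> by (intro mult_left_mono) auto
  then have "2 \<le> \<delta> * \<epsilon> * x t2" using large(2) by linarith
  then have "dist (\<beta> s) 0 < \<epsilon>" if "t2 < s" "ereal s < T" for s
    using beta_stays_below[OF \<delta> t2(2,3) _ _ that(2)] beta_pos[OF that(2)] that(1) by simp
  then show "eventually (\<lambda>t. dist (\<beta> t) 0 < \<epsilon>) (right_end T)"
    using eventually_after[OF t2(2)] by (auto elim!: eventually_mono)
qed

lemma supercritical_trajectory: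
  assumes "p > m + (\<sigma> + 2) / n"
  shows "((\<lambda>t. (1 / x t, y t / x t, z t / x t)) \<longlongrightarrow> (0, 0, 0)) (right_end T)"
proof -
  have \<delta>: "\<delta> > 0" using assms delta_pos_iff by blast
  have "((\<lambda>t. - \<beta> t) \<longlongrightarrow> - 0) (right_end T)" by (intro tendsto_minus beta_tendsto_0 \<delta>)
  then have "((\<lambda>t. y t / x t) \<longlongrightarrow> 0) (right_end T)" by (simp add: \<beta>_def)
  then show ?thesis
    by (intro tendsto_Pair inverse_x_tendsto_0 x_tendsto_infinity_if_delta_pos \<delta> z_over_x_tendsto_0)
qed

lemma n_beta_greater_if_delta_neg: "\<delta> < 0 \<Longrightarrow> ereal t < T \<Longrightarrow> n * \<beta> t > 1"
  using w_neg_if_delta_neg[of t] x_pos[of t] hN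
  by (simp add: w_def \<beta>_def divide_simps mult.commute)

lemma beta_deriv_ge_if_delta_neg:
  assumes "\<delta> < 0" "ereal t < T"
  shows "\<beta>_deriv t \<ge> \<beta> t * (n * (- \<delta>) * x t * \<beta> t - n)"
proof -
  have "n * \<beta> t \<ge> 1" using n_beta_greater_if_delta_neg[OF assms] by simp
  have ident: "B - K - l * (- (K - 1 / l)) * B = K * (l * B - 1)" if "l \<noteq> 0" for B K l :: real
    using that by (simp add: field_simps)
  have "\<beta> t - k - n * (- \<delta>) * \<beta> t = k * (n * \<beta> t - 1)"
    unfolding \<delta>_def by (rule ident) (use hN in simp)
  also have "\<dots> \<ge> 0" using \<open>n * \<beta> t \<ge> 1\<close> by (intro mult_nonneg_nonneg[OF less_imp_le[OF k_pos]]) simp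
  finally have "x t * \<beta> t * (n * (- \<delta>) * \<beta> t) \<le> x t * \<beta> t * (\<beta> t - k)"
    using x_pos[OF assms(2)] beta_pos[OF assms(2)] by (intro mult_left_mono) auto
  then show ?thesis by (simp add: \<beta>_deriv_def algebra_simps)
qed

lemma beta_tendsto_infinity_if_T_infinite:
  assumes \<delta>: "\<delta> < 0" and T: "T = \<infinity>"
  shows "filterlim \<beta> at_top (right_end T)"
proof -
  obtain t1 where t1: "(n + 1) / (- \<delta>) \<le> x t1"
    using x_tendsto_infinity_if_T_infinite[OF T] T
    by (auto simp: right_end_def filterlim_at_top eventually_at_top_linorder)
  \<comment> \<open>Once \<open>x \<ge> (n + 1) / (-\<delta>)\<close>, the lower bound for \<open>\<beta>'\<close> exceeds \<open>1/n\<close>.\<close>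
  have lin: "\<beta> t1 - t1 / n \<le> \<beta> t - t / n" if "t1 \<le> t" for t
  proof (rule DERIV_nonneg_imp_nondecreasing_below[OF that, of T])
    fix r assume r: "t1 \<le> r" "ereal r < T"
    show "((\<lambda>t. \<beta> t - t / n) has_real_derivative \<beta>_deriv r - 1 / n) (at r)"
      using DERIV_diff[OF beta_has_deriv[OF r(2)] DERIV_cdivide[OF DERIV_ident, of n]] by simp
    have "(n + 1) / (- \<delta>) * (- \<delta>) \<le> x r * (- \<delta>)"
      using t1 x_mono[OF r] \<delta> by (intro mult_right_mono) auto
    then have "n + 1 \<le> (- \<delta>) * x r" using \<delta> by (simp add: mult.commute)
    also have "\<dots> \<le> (- \<delta>) * x r * (n * \<beta> r)"
      using mult_left_mono[of 1 "n * \<beta> r" "(- \<delta>) * x r"] n_beta_greater_if_delta_neg[OF \<delta> r(2)]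
        \<delta> x_pos[OF r(2)] by simp
    finally have "1 \<le> n * (- \<delta>) * x r * \<beta> r - n" by (simp add: ac_simps)
    then have "\<beta> r * 1 \<le> \<beta> r * (n * (- \<delta>) * x r * \<beta> r - n)"
      using beta_pos[OF r(2)] by (intro mult_left_mono) auto
    then have "\<beta> r \<le> \<beta>_deriv r" using beta_deriv_ge_if_delta_neg[OF \<delta> r(2)] by simp
    moreover have "1 / n < \<beta> r"
      using n_beta_greater_if_delta_neg[OF \<delta> r(2)] hN by (simp add: divide_simps mult.commute)
    ultimately show "\<beta>_deriv r - 1 / n \<ge> 0" by simp
  qed (use T in simp)
  have "eventually (\<lambda>t. B \<le> \<beta> t) at_top" for B
  proof (rule eventually_mono[OF eventually_ge_at_top[of "max t1 (t1 + n * (B - \<beta> t1))"]])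
    fix t assume t: "max t1 (t1 + n * (B - \<beta> t1)) \<le> t"
    then have "B - \<beta> t1 \<le> (t - t1) / n" using hN by (simp add: field_simps)
    then show "B \<le> \<beta> t" using lin[of t] t by (simp add: diff_divide_distrib)
  qed
  then show ?thesis using T by (simp add: right_end_def filterlim_at_top)
qed

lemma log_beta_deriv_ge:
  assumes \<delta>: "\<delta> < 0" and r: "ereal r < T"
  shows "inverse (\<beta> r) * \<beta>_deriv r \<ge> n * (- \<delta>) / a * (2 - a * y r) - (n + 2 * (n * (- \<delta>) / a))"
proof -
  have "n * (- \<delta>) * x r * \<beta> r - n = inverse (\<beta> r) * (\<beta> r * (n * (- \<delta>) * x r * \<beta> r - n))"
    using beta_pos[OF r] by simp
  also have "\<dots> \<le> inverse (\<beta> r) * \<beta>_deriv r"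
    using beta_deriv_ge_if_delta_neg[OF \<delta> r] beta_pos[OF r] by (intro mult_left_mono) auto
  finally have "n * (- \<delta>) * x r * \<beta> r - n \<le> inverse (\<beta> r) * \<beta>_deriv r" .
  moreover have "n * (- \<delta>) / a * (2 - a * y r) = 2 * (n * (- \<delta>) / a) + n * (- \<delta>) * x r * \<beta> r"
    using y_eq_beta[OF r] hm by (simp add: field_simps)
  ultimately show ?thesis by simp
qed

lemma beta_tendsto_infinity_if_x_tendsto_infinity:
  assumes \<delta>: "\<delta> < 0" and T: "T = ereal T0" and x_inf: "filterlim x at_top (right_end T)"
  shows "filterlim \<beta> at_top (right_end T)"
proof -
  define \<eta> where "\<eta> = n * (- \<delta>) / a"
  have \<eta>: "\<eta> > 0" using \<delta> hm hN unfolding \<eta>_def by (intro divide_pos_pos mult_pos_pos) auto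
  define C where "C = n + 2 * \<eta>"
  have "C \<ge> 0" using \<eta> by (simp add: C_def)
  \<comment> \<open>\<open>\<Psi>\<close> is nondecreasing and \<open>t < T0\<close>, so \<open>ln \<beta>\<close> grows with \<open>\<eta> ln x\<close>.\<close>
  define \<Psi> where "\<Psi> t = ln (\<beta> t) - \<eta> * ln (x t) + C * t" for t
  obtain t1 where t1: "ereal t1 < T" using domain_nonempty by blast
  have \<Psi>_ge: "\<Psi> t1 \<le> \<Psi> t" if "t1 \<le> t" "ereal t < T" for t
  proof (rule DERIV_nonneg_imp_nondecreasing_below[OF that])
    fix r assume r: "t1 \<le> r" "ereal r < T"
    have "((\<lambda>t. ln (\<beta> t)) has_real_derivative inverse (\<beta> r) * \<beta>_deriv r) (at r)"
      by (rule DERIV_chain2[OF DERIV_ln[OF beta_pos[OF r(2)]] beta_has_deriv[OF r(2)]])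
    then show "(\<Psi> has_real_derivative
        inverse (\<beta> r) * \<beta>_deriv r - \<eta> * (2 - a * y r) + C) (at r)"
      unfolding \<Psi>_def[abs_def]
      by (intro DERIV_add DERIV_diff DERIV_cmult ln_x_has_deriv r(2)) (auto intro!: derivative_eq_intros)
    show "inverse (\<beta> r) * \<beta>_deriv r - \<eta> * (2 - a * y r) + C \<ge> 0"
      using log_beta_deriv_ge[OF \<delta> r(2)] by (simp add: \<eta>_def C_def)
  qed
  have "eventually (\<lambda>t. B \<le> \<beta> t) (right_end T)" for B
  proof -
    define L where "L = exp ((ln (\<bar>B\<bar> + 1) - \<Psi> t1 + C * T0) / \<eta>)"
    have "eventually (\<lambda>t. L \<le> x t) (right_end T)" using x_inf by (simp add: filterlim_at_top)
    then show ?thesis using eventually_after[OF t1]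
    proof eventually_elim
      case (elim t)
      then have "ln L \<le> ln (x t)" using ln_le_cancel_iff[of L "x t"] x_pos[of t] by (simp add: L_def)
      then have "ln (\<bar>B\<bar> + 1) - \<Psi> t1 + C * T0 \<le> \<eta> * ln (x t)"
        using \<eta> by (simp add: L_def field_simps)
      moreover have "C * t \<le> C * T0" using \<open>C \<ge> 0\<close> elim T by (intro mult_left_mono) auto
      ultimately have "ln (\<bar>B\<bar> + 1) \<le> ln (\<beta> t)" using \<Psi>_ge[of t] elim by (simp add: \<Psi>_def)
      then show "B \<le> \<beta> t" using beta_pos[of t] elim by simp
    qed
  qed
  then show ?thesis by (simp add: filterlim_at_top)
qed

lemma y_unbounded_below_if_x_bounded:
  assumes T: "T = ereal T0" and B: "\<forall>t<T0. x t \<le> B"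
  shows "\<exists>t<T0. Y < - y t"
proof (rule ccontr)
  assume "\<not> ?thesis"
  then have "\<bar>y t\<bar> \<le> max B Y" if "t < T0" for t using that y_neg[of t] T by force
  moreover have "\<bar>x t\<bar> \<le> max B Y" if "t < T0" for t using that B x_pos[of t] T by force
  ultimately show False
    using S2_maximal_solution_not_bounded[of m N \<sigma> p x y z T0 "max B Y"] sol T z_zero by simp
qed

lemma minus_y_stays_above:
  assumes B: "\<And>t. ereal t < T \<Longrightarrow> x t \<le> B" and Y: "(c + k * B) / m + 1 \<le> Y"
    and t2: "ereal t2 < T" "Y < - y t2" and t: "t2 \<le> t" "ereal t < T"
  shows "Y < - y t"
proof -
  have "B > 0" using B[OF t2(1)] x_pos[OF t2(1)] by simp
  then have "(c + k * B) / m \<ge> 0" using hN hm k_pos by (intro divide_nonneg_pos) auto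
  then have Y_pos: "Y > 0" using Y by simp
  have mY: "c + k * B + m \<le> m * Y" using Y hm by (simp add: field_simps)
  \<comment> \<open>The level \<open>-y = Y\<close> can only be crossed upwards, since \<open>(-y)' \<ge> Y (m Y - c - k B) > 0\<close> there.\<close>
  have "- y t - Y > 0"
  proof (rule positive_persists[where f = "\<lambda>t. - y t - Y", OF _ t2(1) _ _ t])
    show "((\<lambda>t. - y t - Y) has_real_derivative
        - (- x s - c * y s - m * (y s)\<^sup>2 - k * x s * y s)) (at s)" if "ereal s < T" for s
      using DERIV_diff[OF DERIV_minus[OF y_deriv[OF that]] DERIV_const] by simp
  next
    fix s assume s: "t2 \<le> s" "ereal s < T" "- y s - Y = 0"
    have "k * x s * Y \<le> k * B * Y"
      using B[OF s(2)] k_pos Y_pos by (intro mult_right_mono mult_left_mono) auto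
    moreover have "Y * (c + k * B + m) \<le> Y * (m * Y)" using mY Y_pos by (intro mult_left_mono) auto
    moreover have "Y * (c + k * B + m) = c * Y + k * B * Y + m * Y" "Y * (m * Y) = m * Y\<^sup>2"
      by (simp_all add: algebra_simps power2_eq_square)
    moreover have "m * Y > 0" using hm Y_pos by simp
    ultimately have "0 < x s - c * Y + m * Y\<^sup>2 - k * x s * Y"
      using x_pos[OF s(2)] by linarith
    moreover have "y s = - Y" using s(3) by simp
    ultimately show "0 < - (- x s - c * y s - m * (y s)\<^sup>2 - k * x s * y s)" by simp
  qed (use t2 in simp)
  then show ?thesis by simp
qed

lemma minus_y_tendsto_infinity_if_x_bounded:
  assumes T: "T = ereal T0" and B: "\<forall>t<T0. x t \<le> B"
  shows "filterlim (\<lambda>t. - y t) at_top (right_end T)"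
  unfolding filterlim_at_top
proof
  fix Z
  define Y where "Y = max Z ((c + k * B) / m + 1)"
  obtain t2 where t2: "t2 < T0" "Y < - y t2" using y_unbounded_below_if_x_bounded[OF T B] by blast
  have "Y < - y t" if "t2 < t" "ereal t < T" for t
    using minus_y_stays_above[of B Y t2 t] B T t2 that by (simp add: Y_def)
  then have "eventually (\<lambda>t. Y < - y t) (right_end T)"
    using eventually_after[of t2] t2 T by (auto elim!: eventually_mono)
  then show "eventually (\<lambda>t. Z \<le> - y t) (right_end T)"
    by (rule eventually_mono) (simp add: Y_def)
qed

lemma beta_tendsto_infinity:
  assumes \<delta>: "\<delta> < 0"
  shows "filterlim \<beta> at_top (right_end T)"
proof (cases "filterlim x at_top (right_end T)")
  case True
  show ?thesis
  proof (cases T)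
    case (real T0)
    show ?thesis by (rule beta_tendsto_infinity_if_x_tendsto_infinity[OF \<delta> real True])
  qed (use domain_nonempty beta_tendsto_infinity_if_T_infinite[OF \<delta>] in auto)
next
  case False
  then obtain T0 B where T: "T = ereal T0" and B: "\<forall>t<T0. x t \<le> B"
    using x_tendsto_infinity_or_bounded by blast
  obtain t1 where "ereal t1 < T" using domain_nonempty by blast
  then have "B > 0" using B x_pos[of t1] T by force
  have "eventually (\<lambda>t. Z \<le> \<beta> t) (right_end T)" for Z
  proof -
    have "eventually (\<lambda>t. \<bar>Z\<bar> * B \<le> - y t) (right_end T)"
      using minus_y_tendsto_infinity_if_x_bounded[OF T B] by (simp add: filterlim_at_top)
    then show ?thesis using eventually_in_domain
    proof eventually_elim
      case (elim t)
      then have "\<bar>Z\<bar> * x t \<le> - y t"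
        using B T x_pos[of t] mult_left_mono[of "x t" B "\<bar>Z\<bar>"] by force
      then have "\<bar>Z\<bar> \<le> (- y t) / x t" by (subst pos_le_divide_eq[OF x_pos[OF elim(2)]])
      then show "Z \<le> \<beta> t" by (simp add: \<beta>_def)
    qed
  qed
  then show ?thesis by (simp add: filterlim_at_top)
qed

lemma subcritical_trajectory:
  assumes "p < m + (\<sigma> + 2) / n"
  shows "filterlim (\<lambda>t. y t / x t) at_bot (right_end T)"
    and "((\<lambda>t. (1 / x t) / (y t / x t)) \<longlongrightarrow> 0) (right_end T)"
proof -
  have \<delta>: "\<delta> < 0" using assms delta_neg_iff by blast
  have "(\<lambda>t. y t / x t) = (\<lambda>t. - \<beta> t)" by (simp add: \<beta>_def fun_eq_iff)
  then show "filterlim (\<lambda>t. y t / x t) at_bot (right_end T)"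
    using filterlim_uminus_at_top[THEN iffD1, OF beta_tendsto_infinity[OF \<delta>]] by simp
  obtain t1 where t1: "ereal t1 < T" using domain_nonempty by blast
  have "eventually (\<lambda>t. Z \<le> - y t) (right_end T)" for Z
  proof -
    have "eventually (\<lambda>t. \<bar>Z\<bar> / x t1 \<le> \<beta> t) (right_end T)"
      using beta_tendsto_infinity[OF \<delta>] by (simp add: filterlim_at_top)
    then show ?thesis using eventually_after[OF t1]
    proof eventually_elim
      case (elim t)
      then have "\<bar>Z\<bar> \<le> \<beta> t * x t1" using x_pos[OF t1] by (simp add: divide_le_eq)
      also have "\<dots> \<le> \<beta> t * x t"
        using x_mono[of t1 t] elim beta_pos[of t] by (intro mult_left_mono) auto
      also have "\<dots> = - y t" using y_eq_beta[of t] elim by simp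
      finally show "Z \<le> - y t" by simp
    qed
  qed
  then have "((\<lambda>t. - inverse (- y t)) \<longlongrightarrow> - 0) (right_end T)"
    by (intro tendsto_minus tendsto_inverse_0_at_top) (simp add: filterlim_at_top)
  moreover have "eventually (\<lambda>t. - inverse (- y t) = (1 / x t) / (y t / x t)) (right_end T)"
    using eventually_in_domain by eventually_elim (use x_pos y_neg in \<open>force simp: field_simps\<close>)
  ultimately show "((\<lambda>t. (1 / x t) / (y t / x t)) \<longlongrightarrow> 0) (right_end T)"
    by (simp add: tendsto_cong)
qed

end

theorem lemma3p3:
  fixes m \<sigma> p :: real and N :: nat and x y z :: "real \<Rightarrow> real" and T :: ereal
  assumes hm: "m > 1" and h\<sigma>: "\<sigma> > 0" and hp: "p > m" and hN: "N \<ge> 3"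
    and sol: "S2_maximal_solution m N \<sigma> p x y z T"
    and pos: "\<forall>t. ereal t < T \<longrightarrow> x t > 0 \<and> z t = 0"
    and from_Q1: "((\<lambda>t. (x t, y t, z t)) \<longlongrightarrow> (0, 0, 0)) at_bot"
  shows
   "(m < p \<and> p < m + (\<sigma> + 2) / real N \<longrightarrow>
        filterlim (\<lambda>t. y t / x t) at_bot (right_end T) \<and>
        ((\<lambda>t. (1 / x t) / (y t / x t)) \<longlongrightarrow> 0) (right_end T) \<and>
        (\<forall>t. ereal t < T \<longrightarrow> z t / x t = 0))
    \<and> (p = m + (\<sigma> + 2) / real N \<longrightarrow>
        {(x t, y t, z t) | t. ereal t < T} = {(s, - s / real N, 0) | s. s > 0} \<and>
        ((\<lambda>t. (1 / x t, y t / x t, z t / x t)) \<longlongrightarrow> (0, - (p - m) / (\<sigma> + 2), 0))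
          (right_end T))
    \<and> (p > m + (\<sigma> + 2) / real N \<longrightarrow>
        ((\<lambda>t. (1 / x t, y t / x t, z t / x t)) \<longlongrightarrow> (0, 0, 0)) (right_end T))"
proof -
  interpret S2_planar_trajectory m \<sigma> p N x y z T
    by unfold_locales (use assms in auto)
  show ?thesis
    using subcritical_trajectory critical_trajectory supercritical_trajectory z_zero by simp
qed

end
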